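(* Let $(\mathfrak{h},[\;,\;],\langle\;,\;\rangle_{\mathfrak{h}})$ be a Lorentzian nilpotent Lie algebra whose center $\mathrm{Z}(\mathfrak{h})$ is nondegenerate and positive definite, with $\mathfrak{g}$, $[\;,\;]_{\mathfrak{g}}$, $\langle\;,\;\rangle_{\mathfrak{g}}$, $\langle\;,\;\rangle_z$, $\omega$, $\omega_u$, $\omega_u^*$, $S_x$, $J_u$ as in the context. Then the Ricci curvature $\mathrm{ric}_{\mathfrak{h}}$ of $\mathfrak{h}$ satisfies $\mathrm{ric}_{\mathfrak{h}}(u,v)=\mathrm{ric}_{\mathfrak{g}}(u,v)-\tfrac12\mathrm{tr}(\omega_u^*\circ\omega_v)$ for $u,v\in\mathfrak{g}$, $\mathrm{ric}_{\mathfrak{h}}(x,y)=-\tfrac14\mathrm{tr}(S_x\circ S_y)$ for $x,y\in\mathrm{Z}(\mathfrak{h})$, $\mathrm{ric}_{\mathfrak{h}}(u,x)=-\tfrac14\mathrm{tr}(J_u\circ S_x)$ for $x\in\mathrm{Z}(\mathfrak{h})$, $u\in\mathfrak{g}$, where $\mathrm{ric}_{\mathfrak{g}}$ is the Ricci curvature of $(\mathfrak{g},[\;,\;]_{\mathfrak{g}},\langle\;,\;\rangle_{\mathfrak{g}})$.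
   Context: Setting: $\mathfrak{h}$ is a real finite-dimensional nilpotent Lie algebra with a Lorentzian inner product $\langle\;,\;\rangle_{\mathfrak{h}}$ (signature $(1,n-1)$) whose center $\mathrm{Z}(\mathfrak{h})$ is nondegenerate with positive definite restricted inner product $\langle\;,\;\rangle_z$. Put $\mathfrak{g}=\mathrm{Z}(\mathfrak{h})^\perp$ with restricted inner product $\langle\;,\;\rangle_{\mathfrak{g}}$. For $u,v\in\mathfrak{g}$ write $[u,v]=[u,v]_{\mathfrak{g}}+\omega(u,v)$ with $[u,v]_{\mathfrak{g}}\in\mathfrak{g}$, $\omega(u,v)\in\mathrm{Z}(\mathfrak{h})$; $(\mathfrak{g},[\;,\;]_{\mathfrak{g}})$ is a Lie algebra. For $u\in\mathfrak{g}$: $\omega_u:\mathfrak{g}\to\mathrm{Z}(\mathfrak{h})$, $v\mapsto\omega(u,v)$; $\omega_u^*:\mathrm{Z}(\mathfrak{h})\to\mathfrak{g}$ given by $\langle\omega_u^*(x),v\rangle_{\mathfrak{g}}=\langle\omega(u,v),x\rangle_z$; $\mathrm{ad}_u(v)=[u,v]_{\mathfrak{g}}$ with adjoint $\mathrm{ad}_u^*$ w.r.t. $\langle\;,\;\rangle_{\mathfrak{g}}$; $J_u:\mathfrak{g}\to\mathfrak{g}$, $J_u(v)=\mathrm{ad}_v^*(u)$. For $x\in\mathrm{Z}(\mathfrak{h})$, $S_x:\mathfrak{g}\to\mathfrak{g}$, $S_x(u)=\omega_u^*(x)$. Ricci curvature of a pseudo-Euclidean Lie algebra: Levi-Civita product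 $2\langle \mathrm{L}_uv,w\rangle=\langle[u,v],w\rangle+\langle[w,u],v\rangle+\langle[w,v],u\rangle$, curvature $K(u,v)=\mathrm{L}_{[u,v]}-[\mathrm{L}_u,\mathrm{L}_v]$, $\mathrm{ric}(u,v)=\mathrm{tr}(w\mapsto K(u,w)v)$. *)

theory Defs
  imports "HOL-Analysis.Analysis"
begin

(* The Euclidean inner product of 'a is used ONLY as an auxiliary device to compute traces
   (traces are basis independent); the pseudo-Euclidean metric is the separate form B. *)

definition onb :: "'a::euclidean_space set \<Rightarrow> 'a set \<Rightarrow> bool" where
  "onb V E \<longleftrightarrow> E \<subseteq> V \<and> pairwise orthogonal E \<and> (\<forall>e\<in>E. norm e = 1)
                \<and> independent E \<and> span E = V"

definition trace_on :: "'a::euclidean_space set \<Rightarrow> ('a \<Rightarrow> 'a) \<Rightarrow> real" where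
  "trace_on V f = (\<Sum>e\<in>(SOME E. onb V E). f e \<bullet> e)"

definition lie_algebra :: "('a::real_vector \<Rightarrow> 'a \<Rightarrow> 'a) \<Rightarrow> bool" where
  "lie_algebra br \<longleftrightarrow> bilinear br \<and> (\<forall>x. br x x = 0)
     \<and> (\<forall>x y z. br x (br y z) + br y (br z x) + br z (br x y) = 0)"

fun lcs :: "('a::real_vector \<Rightarrow> 'a \<Rightarrow> 'a) \<Rightarrow> nat \<Rightarrow> 'a set" where
  "lcs br 0 = UNIV"
| "lcs br (Suc k) = span {br x y | x y. y \<in> lcs br k}"

definition nilpotent_lie :: "('a::real_vector \<Rightarrow> 'a \<Rightarrow> 'a) \<Rightarrow> bool" where
  "nilpotent_lie br \<longleftrightarrow> (\<exists>k. lcs br k = {0})"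

definition lorentzian :: "('a::real_vector \<Rightarrow> 'a \<Rightarrow> real) \<Rightarrow> bool" where
  "lorentzian B \<longleftrightarrow> bilinear B \<and> (\<forall>x y. B x y = B y x) \<and>
     (\<exists>E. finite E \<and> independent E \<and> span E = UNIV \<and>
          (\<forall>e\<in>E. \<forall>f\<in>E. e \<noteq> f \<longrightarrow> B e f = 0) \<and>
          (\<exists>e0\<in>E. B e0 e0 = -1 \<and> (\<forall>e\<in>E - {e0}. B e e = 1)))"

definition center :: "('a::real_vector \<Rightarrow> 'a \<Rightarrow> 'a) \<Rightarrow> 'a set" where
  "center br = {x. \<forall>y. br x y = 0}"

definition orth_compl :: "('a \<Rightarrow> 'a \<Rightarrow> real) \<Rightarrow> 'a set \<Rightarrow> 'a set" where
  "orth_compl B V = {u. \<forall>x\<in>V. B u x = 0}"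

abbreviation gpart :: "('a::real_vector \<Rightarrow> 'a \<Rightarrow> 'a) \<Rightarrow> ('a \<Rightarrow> 'a \<Rightarrow> real) \<Rightarrow> 'a set" where
  "gpart br B \<equiv> orth_compl B (center br)"

definition omega :: "('a::real_vector \<Rightarrow> 'a \<Rightarrow> 'a) \<Rightarrow> ('a \<Rightarrow> 'a \<Rightarrow> real) \<Rightarrow> 'a \<Rightarrow> 'a \<Rightarrow> 'a" where
  "omega br B u v = (THE x. x \<in> center br \<and> br u v - x \<in> gpart br B)"

definition brg :: "('a::real_vector \<Rightarrow> 'a \<Rightarrow> 'a) \<Rightarrow> ('a \<Rightarrow> 'a \<Rightarrow> real) \<Rightarrow> 'a \<Rightarrow> 'a \<Rightarrow> 'a" where
  "brg br B u v = br u v - omega br B u v"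

definition adjoint_on :: "'a set \<Rightarrow> ('a \<Rightarrow> 'a \<Rightarrow> real) \<Rightarrow> ('a \<Rightarrow> 'a) \<Rightarrow> 'a \<Rightarrow> 'a" where
  "adjoint_on V B f y = (THE x. x \<in> V \<and> (\<forall>v\<in>V. B x v = B (f v) y))"

definition omega_star :: "('a::real_vector \<Rightarrow> 'a \<Rightarrow> 'a) \<Rightarrow> ('a \<Rightarrow> 'a \<Rightarrow> real) \<Rightarrow> 'a \<Rightarrow> 'a \<Rightarrow> 'a" where
  "omega_star br B u = adjoint_on (gpart br B) B (omega br B u)"

definition S_op :: "('a::real_vector \<Rightarrow> 'a \<Rightarrow> 'a) \<Rightarrow> ('a \<Rightarrow> 'a \<Rightarrow> real) \<Rightarrow> 'a \<Rightarrow> 'a \<Rightarrow> 'a" where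
  "S_op br B x u = omega_star br B u x"

definition ad_star :: "('a::real_vector \<Rightarrow> 'a \<Rightarrow> 'a) \<Rightarrow> ('a \<Rightarrow> 'a \<Rightarrow> real) \<Rightarrow> 'a \<Rightarrow> 'a \<Rightarrow> 'a" where
  "ad_star br B u = adjoint_on (gpart br B) B (brg br B u)"

definition J_op :: "('a::real_vector \<Rightarrow> 'a \<Rightarrow> 'a) \<Rightarrow> ('a \<Rightarrow> 'a \<Rightarrow> real) \<Rightarrow> 'a \<Rightarrow> 'a \<Rightarrow> 'a" where
  "J_op br B u v = ad_star br B v u"

definition LC :: "'a set \<Rightarrow> ('a::real_vector \<Rightarrow> 'a \<Rightarrow> 'a) \<Rightarrow> ('a \<Rightarrow> 'a \<Rightarrow> real) \<Rightarrow> 'a \<Rightarrow> 'a \<Rightarrow> 'a" where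
  "LC V br B u v = (THE z. z \<in> V \<and>
     (\<forall>w\<in>V. 2 * B z w = B (br u v) w + B (br w u) v + B (br w v) u))"

definition curv :: "'a set \<Rightarrow> ('a::real_vector \<Rightarrow> 'a \<Rightarrow> 'a) \<Rightarrow> ('a \<Rightarrow> 'a \<Rightarrow> real) \<Rightarrow> 'a \<Rightarrow> 'a \<Rightarrow> 'a \<Rightarrow> 'a" where
  "curv V br B u v w = LC V br B (br u v) w
      - (LC V br B u (LC V br B v w) - LC V br B v (LC V br B u w))"

definition ricci :: "'a::euclidean_space set \<Rightarrow> ('a \<Rightarrow> 'a \<Rightarrow> 'a) \<Rightarrow> ('a \<Rightarrow> 'a \<Rightarrow> real) \<Rightarrow> 'a \<Rightarrow> 'a \<Rightarrow> real" where
  "ricci V br B u v = trace_on V (\<lambda>w. curv V br B u w v)"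

end

theory Submission
  imports Defs
begin

(* Write h = g + Z(h) with the B-orthogonal projections P and Q; they exist because B is
   positive definite on Z(h), and then B restricted to g is nondegenerate as well.  Since Z(h)
   is central, the Koszul formula gives the Levi-Civita product of h in closed form,
     L_a b = Lg_(Pa) (Pb) + 1/2 omega(Pa, Pb) - 1/2 S_(Qb) (Pa) - 1/2 S_(Qa) (Pb),
   so K(u,w)v can be expanded for each of the three types of arguments.  Splitting the trace
   over g + Z(h), the formulas reduce to trace identities on g: tr S_x = 0 because S_x is
   B-skew, tr (w |-> Lg_w c) = 0 because ad_c is nilpotent and hence traceless, and the
   remaining terms are matched by tr (AC) = tr (CA) and by transposing bilinear forms.
   Traces are computed in a Euclidean orthonormal basis; transposition with respect to B is
   done by contracting against the B-dual basis of g. *)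

section \<open>Traces on subspaces\<close>

lemma onb_some:
  assumes "subspace V" shows "onb V (SOME E. onb V E)"
proof -
  obtain E where "E \<subseteq> V" "pairwise orthogonal E" "\<And>x. x \<in> E \<Longrightarrow> norm x = 1"
      "independent E" "span E = V"
    using orthonormal_basis_subspace[OF assms] by metis
  then have "onb V E" by (auto simp: onb_def)
  then show ?thesis by (rule someI)
qed

lemma onb_finite: "onb V E \<Longrightarrow> finite E"
  by (simp add: onb_def finiteI_independent)

lemma onb_subset: "onb V E \<Longrightarrow> E \<subseteq> V"
  by (simp add: onb_def)

lemma onb_inner:
  assumes "onb V E" "e \<in> E" "e' \<in> E"
  shows "e \<bullet> e' = (if e = e' then 1 else 0)"
  using assms unfolding onb_def pairwise_def orthogonal_def by (auto simp: norm_eq_1)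

lemma onb_inner_sum:
  assumes "onb V E" "e \<in> E"
  shows "(\<Sum>d\<in>E. c d *\<^sub>R d) \<bullet> e = c e"
proof -
  have "(\<Sum>d\<in>E. c d *\<^sub>R d) \<bullet> e = (\<Sum>d\<in>E. c d * (d \<bullet> e))"
    by (simp add: inner_sum_left)
  also have "\<dots> = (\<Sum>d\<in>E. if d = e then c e else 0)"
    by (rule sum.cong[OF refl]) (simp add: onb_inner[OF assms(1) _ assms(2)])
  also have "\<dots> = c e"
    using onb_finite[OF assms(1)] assms(2) by simp
  finally show ?thesis .
qed

lemma onb_expansion:
  assumes E: "onb V E" and y: "y \<in> V"
  shows "y = (\<Sum>e\<in>E. (y \<bullet> e) *\<^sub>R e)"
proof -
  define z where "z = y - (\<Sum>e\<in>E. (y \<bullet> e) *\<^sub>R e)"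
  have "(\<Sum>e\<in>E. (y \<bullet> e) *\<^sub>R e) \<in> span E"
    by (intro span_sum span_scale span_base)
  moreover have "y \<in> span E"
    using E y by (simp add: onb_def)
  ultimately have "z \<in> span E"
    unfolding z_def by (rule span_diff[rotated])
  moreover have "orthogonal z e" if "e \<in> E" for e
    using onb_inner_sum[OF E that] by (simp add: z_def orthogonal_def inner_diff_left)
  ultimately have "orthogonal z z"
    using orthogonal_to_span by blast
  then show ?thesis by (simp add: z_def orthogonal_def)
qed

lemma linear_onb_expansion:
  assumes "onb V E" "y \<in> V" "linear g"
  shows "g y = (\<Sum>e\<in>E. (y \<bullet> e) *\<^sub>R g e)"
proof -
  have "g y = g (\<Sum>e\<in>E. (y \<bullet> e) *\<^sub>R e)"
    using onb_expansion[OF assms(1,2)] by simp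
  also have "\<dots> = (\<Sum>e\<in>E. (y \<bullet> e) *\<^sub>R g e)"
    by (simp add: linear_sum[OF assms(3)] linear_scale[OF assms(3)])
  finally show ?thesis .
qed

lemma trace_on_def_onb:
  assumes "subspace V"
  obtains E where "onb V E" "\<And>f. trace_on V f = (\<Sum>e\<in>E. f e \<bullet> e)"
  using onb_some[OF assms] by (simp add: trace_on_def)

lemma trace_on_cong:
  assumes "subspace V" "\<And>x. x \<in> V \<Longrightarrow> f x = g x"
  shows "trace_on V f = trace_on V g"
  using onb_subset[OF onb_some[OF assms(1)]] assms(2)
  unfolding trace_on_def by (intro sum.cong) auto

lemma trace_on_add: "trace_on V (\<lambda>x. f x + g x) = trace_on V f + trace_on V g"
  by (simp add: trace_on_def inner_add_left sum.distrib)

lemma trace_on_diff: "trace_on V (\<lambda>x. f x - g x) = trace_on V f - trace_on V g"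
  by (simp add: trace_on_def inner_diff_left sum_subtractf)

lemma trace_on_scaleR: "trace_on V (\<lambda>x. c *\<^sub>R f x) = c * trace_on V f"
  by (simp add: trace_on_def sum_distrib_left)

lemma trace_on_zero: "trace_on V (\<lambda>x. 0) = 0"
  by (simp add: trace_on_def)

lemma trace_on_zero_space: "trace_on {0} f = 0"
  using onb_subset[OF onb_some[OF subspace_single_0]]
  unfolding trace_on_def by (intro sum.neutral) auto

lemma trace_on_frame:
  fixes b :: "'i \<Rightarrow> 'a::euclidean_space" and \<phi> :: "'i \<Rightarrow> 'a \<Rightarrow> real"
  assumes V: "subspace V" and I: "finite I"
    and expansion: "\<And>y. y \<in> V \<Longrightarrow> y = (\<Sum>i\<in>I. \<phi> i y *\<^sub>R b i)"
    and b: "\<And>i. i \<in> I \<Longrightarrow> b i \<in> V" and \<phi>: "\<And>i. i \<in> I \<Longrightarrow> linear (\<phi> i)"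
    and f: "linear f" "\<And>x. x \<in> V \<Longrightarrow> f x \<in> V"
  shows "trace_on V f = (\<Sum>i\<in>I. \<phi> i (f (b i)))"
proof -
  obtain E where E: "onb V E" and tr: "trace_on V f = (\<Sum>e\<in>E. f e \<bullet> e)"
    using trace_on_def_onb[OF V] by metis
  have "f e \<bullet> e = (\<Sum>i\<in>I. \<phi> i (f e) * (b i \<bullet> e))" if "e \<in> E" for e
  proof -
    have "f e = (\<Sum>i\<in>I. \<phi> i (f e) *\<^sub>R b i)"
      using expansion f(2) onb_subset[OF E] that by blast
    then have "f e \<bullet> e = (\<Sum>i\<in>I. \<phi> i (f e) *\<^sub>R b i) \<bullet> e"
      by (rule arg_cong)
    then show ?thesis
      by (simp add: inner_sum_left)
  qed
  then have "trace_on V f = (\<Sum>e\<in>E. \<Sum>i\<in>I. \<phi> i (f e) * (b i \<bullet> e))"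
    unfolding tr by (rule sum.cong[OF refl])
  also have "\<dots> = (\<Sum>i\<in>I. \<Sum>e\<in>E. \<phi> i (f e) * (b i \<bullet> e))"
    by (rule sum.swap)
  also have "\<dots> = (\<Sum>i\<in>I. \<phi> i (f (b i)))"
  proof (rule sum.cong[OF refl])
    fix i assume "i \<in> I"
    then have "linear (\<lambda>x. \<phi> i (f x))"
      using linear_compose[OF f(1) \<phi>] by (simp add: o_def)
    from linear_onb_expansion[OF E b[OF \<open>i \<in> I\<close>] this]
    show "(\<Sum>e\<in>E. \<phi> i (f e) * (b i \<bullet> e)) = \<phi> i (f (b i))"
      by (simp add: mult.commute)
  qed
  finally show ?thesis .
qed

lemma onb_disjoint:
  assumes "onb V D" "onb W E" "V \<inter> W = {0}"
  shows "D \<inter> E = {}"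
proof -
  have "e = 0" if "e \<in> D" "e \<in> E" for e
    using that onb_subset[OF assms(1)] onb_subset[OF assms(2)] assms(3) by auto
  moreover have "e \<noteq> 0" if "e \<in> D" for e
    using assms(1) that by (auto simp: onb_def)
  ultimately show ?thesis
    by blast
qed

lemma trace_on_direct_sum:
  fixes p q f :: "'a::euclidean_space \<Rightarrow> 'a"
  assumes U: "subspace U" and V: "subspace V" "V \<subseteq> U" and W: "subspace W" "W \<subseteq> U"
    and VW: "V \<inter> W = {0}"
    and p: "linear p" "\<And>y. y \<in> U \<Longrightarrow> p y \<in> V"
    and q: "linear q" "\<And>y. y \<in> U \<Longrightarrow> q y \<in> W"
    and pq: "\<And>y. y \<in> U \<Longrightarrow> p y + q y = y"
    and f: "linear f" "\<And>x. x \<in> U \<Longrightarrow> f x \<in> U"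
  shows "trace_on U f = trace_on V (\<lambda>x. p (f x)) + trace_on W (\<lambda>x. q (f x))"
proof -
  obtain D where D: "onb V D" and trV: "\<And>g. trace_on V g = (\<Sum>e\<in>D. g e \<bullet> e)"
    using trace_on_def_onb[OF V(1)] by metis
  obtain E where E: "onb W E" and trW: "\<And>g. trace_on W g = (\<Sum>e\<in>E. g e \<bullet> e)"
    using trace_on_def_onb[OF W(1)] by metis
  have fin: "finite D" "finite E"
    using onb_finite[OF D] onb_finite[OF E] .
  have disj: "D \<inter> E = {}"
    using onb_disjoint[OF D E VW] .
  define \<phi> where "\<phi> e y = (if e \<in> D then p y \<bullet> e else q y \<bullet> e)" for e y
  have \<phi>_D: "\<phi> e y = p y \<bullet> e" if "e \<in> D" for e y
    using that by (simp add: \<phi>_def)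
  have \<phi>_E: "\<phi> e y = q y \<bullet> e" if "e \<in> E" for e y
    using that disj by (auto simp: \<phi>_def)
  have "trace_on U f = (\<Sum>e\<in>D \<union> E. \<phi> e (f e))"
  proof (rule trace_on_frame[OF U])
    show "finite (D \<union> E)"
      using fin by simp
    show "e \<in> U" if "e \<in> D \<union> E" for e
      using that onb_subset[OF D] onb_subset[OF E] V(2) W(2) by auto
    show "linear (\<phi> e)" for e
      by (rule linearI) (simp_all add: \<phi>_def linear_add[OF p(1)] linear_add[OF q(1)]
          linear_scale[OF p(1)] linear_scale[OF q(1)] inner_add_left)
    show "linear f" "\<And>x. x \<in> U \<Longrightarrow> f x \<in> U"
      by (fact f)+
    fix y assume y: "y \<in> U"
    have "(\<Sum>e\<in>D \<union> E. \<phi> e y *\<^sub>R e) = (\<Sum>e\<in>D. (p y \<bullet> e) *\<^sub>R e) + (\<Sum>e\<in>E. (q y \<bullet> e) *\<^sub>R e)"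
      by (simp add: sum.union_disjoint[OF fin disj] \<phi>_D \<phi>_E)
    also have "\<dots> = y"
      using onb_expansion[OF D p(2)[OF y]] onb_expansion[OF E q(2)[OF y]] pq[OF y] by simp
    finally show "y = (\<Sum>e\<in>D \<union> E. \<phi> e y *\<^sub>R e)" ..
  qed
  also have "\<dots> = (\<Sum>e\<in>D. p (f e) \<bullet> e) + (\<Sum>e\<in>E. q (f e) \<bullet> e)"
    by (simp add: sum.union_disjoint[OF fin disj] \<phi>_D \<phi>_E)
  finally show ?thesis
    by (simp add: trV trW)
qed

lemma orthogonal_projection_exists:
  fixes W :: "'a::euclidean_space set"
  assumes W: "subspace W"
  obtains p where "linear p" "\<And>y. p y \<in> W" "\<And>w. w \<in> W \<Longrightarrow> p w = w"
    "\<And>y w. w \<in> W \<Longrightarrow> orthogonal (y - p y) w"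
proof -
  obtain E where E: "onb W E"
    using onb_some[OF W] by blast
  define p where "p y = (\<Sum>e\<in>E. (y \<bullet> e) *\<^sub>R e)" for y
  have "linear p"
    unfolding p_def
    by (rule linearI) (simp_all add: inner_add_left scaleR_add_left sum.distrib scaleR_sum_right)
  moreover have "p y \<in> W" for y
    unfolding p_def using onb_subset[OF E] by (intro subspace_sum[OF W] subspace_scale[OF W]) auto
  moreover have "p w = w" if "w \<in> W" for w
    using onb_expansion[OF E that] by (simp add: p_def)
  moreover have "orthogonal (y - p y) w" if "w \<in> W" for y w
  proof -
    have "orthogonal (y - p y) e" if "e \<in> E" for e
      using onb_inner_sum[OF E that] by (simp add: p_def orthogonal_def inner_diff_left)
    then show ?thesis
      using orthogonal_to_span[of w E "y - p y"] E that by (simp add: onb_def)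
  qed
  ultimately show ?thesis
    by (rule that)
qed

lemma trace_on_range_subspace:
  fixes f :: "'a::euclidean_space \<Rightarrow> 'a"
  assumes U: "subspace U" and W: "subspace W" "W \<subseteq> U"
    and f: "linear f" "\<And>x. x \<in> U \<Longrightarrow> f x \<in> W"
  shows "trace_on U f = trace_on W f"
proof -
  obtain p where p: "linear p" "\<And>y. p y \<in> W" "\<And>w. w \<in> W \<Longrightarrow> p w = w"
    "\<And>y w. w \<in> W \<Longrightarrow> orthogonal (y - p y) w"
    using orthogonal_projection_exists[OF W(1)] by blast
  define W' where "W' = {y \<in> U. \<forall>w\<in>W. orthogonal y w}"
  have W': "subspace W'" "W' \<subseteq> U"
    unfolding W'_def subspace_def orthogonal_def
    using subspace_0[OF U] subspace_add[OF U] subspace_scale[OF U] by (auto simp: inner_add_left)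
  have "W \<inter> W' = {0}"
    using subspace_0[OF W(1)] subspace_0[OF W'(1)] by (auto simp: W'_def orthogonal_def)
  moreover have "y - p y \<in> W'" if "y \<in> U" for y
    using that p(2,4) W(2) subspace_diff[OF U that, of "p y"] by (auto simp: W'_def)
  moreover have "linear (\<lambda>y. y - p y)"
    using linear_compose_sub[OF linear_ident p(1)] .
  moreover have "f x \<in> U" if "x \<in> U" for x
    using f(2) W(2) that by auto
  ultimately have "trace_on U f = trace_on W (\<lambda>x. p (f x)) + trace_on W' (\<lambda>x. f x - p (f x))"
    by (intro trace_on_direct_sum[OF U W W'] p(1,2) f(1)) auto
  also have "trace_on W (\<lambda>x. p (f x)) = trace_on W f"
    using W(2) f(2) p(3) by (intro trace_on_cong[OF W(1)]) auto
  also have "trace_on W' (\<lambda>x. f x - p (f x)) = trace_on W' (\<lambda>x. 0)"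
    using W'(2) f(2) p(3) by (intro trace_on_cong[OF W'(1)]) auto
  finally show ?thesis
    by (simp add: trace_on_zero)
qed

lemma trace_on_descending_chain:
  fixes f :: "'a::euclidean_space \<Rightarrow> 'a"
  assumes V: "\<And>j. subspace (V j)" "\<And>j. V (Suc j) \<subseteq> V j" "V k = {0}"
    and f: "linear f" "\<And>j x. x \<in> V j \<Longrightarrow> f x \<in> V (Suc j)"
  shows "trace_on (V 0) f = 0"
proof -
  have "trace_on (V 0) f = trace_on (V j) f" for j
  proof (induction j)
    case (Suc j)
    then show ?case
      using trace_on_range_subspace[OF V(1) V(1) V(2) f, of j] by simp
  qed simp
  from this[of k] show ?thesis
    by (simp add: V(3) trace_on_zero_space)
qed

lemma trace_on_comp_commute:
  fixes A C :: "'a::euclidean_space \<Rightarrow> 'a"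
  assumes V: "subspace V" and W: "subspace W"
    and A: "linear A" "\<And>x. x \<in> V \<Longrightarrow> A x \<in> W"
    and C: "linear C" "\<And>x. x \<in> W \<Longrightarrow> C x \<in> V"
  shows "trace_on V (\<lambda>x. C (A x)) = trace_on W (\<lambda>x. A (C x))"
proof -
  obtain D where D: "onb V D" and trV: "\<And>g. trace_on V g = (\<Sum>d\<in>D. g d \<bullet> d)"
    using trace_on_def_onb[OF V] by metis
  obtain E where E: "onb W E" and trW: "\<And>g. trace_on W g = (\<Sum>e\<in>E. g e \<bullet> e)"
    using trace_on_def_onb[OF W] by metis
  have CA: "C (A d) \<bullet> d = (\<Sum>e\<in>E. (A d \<bullet> e) * (C e \<bullet> d))" if "d \<in> D" for d
  proof -
    have "A d \<in> W"
      using A(2) onb_subset[OF D] that by blast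
    from linear_onb_expansion[OF E this C(1)] show ?thesis
      by (simp add: inner_sum_left)
  qed
  have AC: "A (C e) \<bullet> e = (\<Sum>d\<in>D. (A d \<bullet> e) * (C e \<bullet> d))" if "e \<in> E" for e
  proof -
    have "C e \<in> V"
      using C(2) onb_subset[OF E] that by blast
    from linear_onb_expansion[OF D this A(1)] show ?thesis
      by (simp add: inner_sum_left mult.commute)
  qed
  have "trace_on V (\<lambda>x. C (A x)) = (\<Sum>d\<in>D. \<Sum>e\<in>E. (A d \<bullet> e) * (C e \<bullet> d))"
    unfolding trV using CA by (rule sum.cong[OF refl])
  also have "\<dots> = (\<Sum>e\<in>E. \<Sum>d\<in>D. (A d \<bullet> e) * (C e \<bullet> d))"
    by (rule sum.swap)
  also have "\<dots> = trace_on W (\<lambda>x. A (C x))"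
    unfolding trW using AC by (intro sum.cong refl) simp
  finally show ?thesis .
qed

section \<open>Lorentzian and positive definite forms\<close>

lemma bilinearI:
  assumes "\<And>x y z. f (x + y) z = f x z + f y z" "\<And>x y z. f x (y + z) = f x y + f x z"
    and "\<And>c x y. f (c *\<^sub>R x) y = c *\<^sub>R f x y" "\<And>c x y. f x (c *\<^sub>R y) = c *\<^sub>R f x y"
  shows "bilinear f"
  unfolding bilinear_def by (intro allI conjI linearI) (simp_all add: assms)

lemma lorentzian_bilinear: "lorentzian B \<Longrightarrow> bilinear B"
  by (simp add: lorentzian_def)

lemma lorentzian_sym: "lorentzian B \<Longrightarrow> B x y = B y x"
  by (simp add: lorentzian_def)

lemma lorentzian_represents:
  assumes B: "lorentzian B" and l: "linear l"
  shows "\<exists>r. \<forall>y. B r y = l y"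
proof -
  obtain E where E: "finite E" "span E = UNIV" "\<forall>e\<in>E. \<forall>f\<in>E. e \<noteq> f \<longrightarrow> B e f = 0"
    and signs: "\<exists>e0\<in>E. B e0 e0 = -1 \<and> (\<forall>e\<in>E - {e0}. B e e = 1)"
    using B unfolding lorentzian_def by (elim conjE exE) (rule that; assumption)
  obtain e0 where e0: "e0 \<in> E" "B e0 e0 = -1" "\<forall>e\<in>E - {e0}. B e e = 1"
    using signs by blast
  have sq: "B e e * B e e = 1" if "e \<in> E" for e
    using e0 that by (cases "e = e0") auto
  have lin: "linear (\<lambda>x. B x y)" "linear (\<lambda>y. B x y)" for x y
    using lorentzian_bilinear[OF B] by (simp_all add: bilinear_def)
  define r where "r = (\<Sum>e\<in>E. (B e e * l e) *\<^sub>R e)"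
  have "B r f = l f" if f: "f \<in> E" for f
  proof -
    have "B r f = (\<Sum>e\<in>E. B e e * l e * B e f)"
      unfolding r_def linear_sum[OF lin(1)] linear_scale[OF lin(1)] by simp
    also have "\<dots> = (\<Sum>e\<in>E. if e = f then B f f * B f f * l f else 0)"
    proof (rule sum.cong[OF refl])
      fix e assume "e \<in> E"
      then show "B e e * l e * B e f = (if e = f then B f f * B f f * l f else 0)"
        using E(3) f by auto
    qed
    also have "\<dots> = l f"
      using E(1) f sq[OF f] by simp
    finally show ?thesis .
  qed
  then have "B r y = l y" for y
    using linear_eq_on[OF lin(2) l, of y E] E(2) by blast
  then show ?thesis by blast
qed

lemma lorentzian_nondegenerate:
  fixes B :: "'a::real_inner \<Rightarrow> 'a \<Rightarrow> real"
  assumes B: "lorentzian B" and a: "\<And>y. B a y = 0"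
  shows "a = 0"
proof -
  have "linear (\<lambda>y. a \<bullet> y)"
    by (rule linearI) (simp_all add: inner_add_right)
  then obtain r where r: "\<And>y. B r y = a \<bullet> y"
    using lorentzian_represents[OF B] by blast
  have "a \<bullet> a = B a r"
    using r lorentzian_sym[OF B] by metis
  then have "a \<bullet> a = 0"
    using a by simp
  then show ?thesis
    by simp
qed

lemma linear_inj_on_subspace_onto:
  fixes T :: "'a::euclidean_space \<Rightarrow> 'a"
  assumes T: "linear T" "inj_on T Z" "\<And>z. z \<in> Z \<Longrightarrow> T z \<in> Z" and Z: "subspace Z"
  shows "T ` Z = Z"
proof -
  have "dim (T ` Z) = dim Z"
    using dim_image_eq[OF T(1), of Z] T(2) span_eq_iff[THEN iffD2, OF Z] by simp
  then show ?thesis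
    using subspace_dim_equal[of "T ` Z" Z] linear_subspace_image[OF T(1) Z] Z T(3) by auto
qed

lemma bilinear_eq_on_onb:
  assumes "bilinear B" "onb Z D" "\<And>d. d \<in> D \<Longrightarrow> B z d = B y d" "z' \<in> Z"
  shows "B z z' = B y z'"
  using linear_eq_on[of "\<lambda>z'. B z z'" "\<lambda>z'. B y z'" z' D] assms by (simp add: bilinear_def onb_def)

lemma posdef_projection_exists:
  fixes B :: "'a::euclidean_space \<Rightarrow> 'a \<Rightarrow> real"
  assumes B: "bilinear B" and Z: "subspace Z"
    and posdef: "\<And>z. z \<in> Z \<Longrightarrow> z \<noteq> 0 \<Longrightarrow> B z z > 0"
  shows "\<exists>z\<in>Z. \<forall>z'\<in>Z. B z z' = B a z'"
proof -
  obtain D where D: "onb Z D"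
    using onb_some[OF Z] by blast
  have lin: "linear (\<lambda>z. B z z')" for z'
    using B by (simp add: bilinear_def)
  define T where "T z = (\<Sum>d\<in>D. B z d *\<^sub>R d)" for z
  have T_lin: "linear T"
    unfolding T_def
    by (rule linearI) (simp_all add: linear_add[OF lin] linear_scale[OF lin]
        scaleR_add_left sum.distrib scaleR_sum_right)
  have T_Z: "T z \<in> Z" for z
    unfolding T_def using onb_subset[OF D] by (intro subspace_sum[OF Z] subspace_scale[OF Z]) auto
  have T_coeff: "T z \<bullet> d = B z d" if "d \<in> D" for z d
    unfolding T_def by (rule onb_inner_sum[OF D that])
  have "T ` Z = Z"
  proof (rule linear_inj_on_subspace_onto[OF T_lin inj_onI T_Z Z])
    fix z1 z2 assume z12: "z1 \<in> Z" "z2 \<in> Z" "T z1 = T z2"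
    have z: "z1 - z2 \<in> Z"
      using subspace_diff[OF Z z12(1,2)] .
    have "B (z1 - z2) d = B 0 d" if "d \<in> D" for d
      using T_coeff[OF that, of z1] T_coeff[OF that, of z2] z12(3)
      by (simp add: linear_diff[OF lin] linear_0[OF lin])
    then have "B (z1 - z2) (z1 - z2) = B 0 (z1 - z2)"
      by (rule bilinear_eq_on_onb[OF B D _ z])
    then show "z1 = z2"
      using posdef[OF z] by (fastforce simp: linear_0[OF lin])
  qed
  then obtain z where z: "z \<in> Z" "T a = T z"
    using T_Z[of a] by (metis imageE)
  have "B z d = B a d" if "d \<in> D" for d
    using T_coeff[OF that, of z] T_coeff[OF that, of a] z(2) by simp
  then show ?thesis
    using z(1) bilinear_eq_on_onb[OF B D] by blast
qed

lemma lcs_subspace: "subspace (lcs br k)"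
  by (cases k) (simp_all add: subspace_UNIV subspace_span)

lemma lcs_Suc_subset: "lcs br (Suc k) \<subseteq> lcs br k"
proof (induction k)
  case 0
  show ?case by simp
next
  case (Suc k)
  then have "{br x y |x y. y \<in> lcs br (Suc k)} \<subseteq> {br x y |x y. y \<in> lcs br k}"
    by blast
  then show ?case
    by (simp only: lcs.simps) (rule span_mono)
qed

lemma trace_ad_nilpotent:
  fixes br :: "'a::euclidean_space \<Rightarrow> 'a \<Rightarrow> 'a"
  assumes br: "bilinear br" and nilp: "nilpotent_lie br"
  shows "trace_on UNIV (br c) = 0"
proof -
  obtain k where k: "lcs br k = {0}"
    using nilp by (auto simp: nilpotent_lie_def)
  have "linear (br c)"
    using br by (simp add: bilinear_def)
  moreover have "br c x \<in> lcs br (Suc j)" if "x \<in> lcs br j" for j x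
    using that by (auto intro: span_base)
  ultimately have "trace_on (lcs br 0) (br c) = 0"
    using trace_on_descending_chain[where V = "lcs br", OF lcs_subspace lcs_Suc_subset k] by blast
  then show ?thesis
    by simp
qed

section \<open>Splitting along the center\<close>

locale nilpotent_lorentzian =
  fixes br :: "'a::euclidean_space \<Rightarrow> 'a \<Rightarrow> 'a" and B :: "'a \<Rightarrow> 'a \<Rightarrow> real"
  assumes lie: "lie_algebra br" and nilp: "nilpotent_lie br" and lor: "lorentzian B"
    and center_posdef: "\<And>z. z \<in> center br \<Longrightarrow> z \<noteq> 0 \<Longrightarrow> B z z > 0"
begin

abbreviation Z where "Z \<equiv> center br"
abbreviation G where "G \<equiv> gpart br B"

lemma bilinear_br: "bilinear br"
  using lie by (simp add: lie_algebra_def)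

lemma bilinear_B: "bilinear B"
  using lorentzian_bilinear[OF lor] .

lemma B_sym: "B x y = B y x"
  using lorentzian_sym[OF lor] .

lemmas br_simps[simp] = bilinear_ladd[OF bilinear_br] bilinear_radd[OF bilinear_br]
  bilinear_lmul[OF bilinear_br] bilinear_rmul[OF bilinear_br]
  bilinear_lneg[OF bilinear_br] bilinear_rneg[OF bilinear_br]
  bilinear_lzero[OF bilinear_br] bilinear_rzero[OF bilinear_br]
  bilinear_lsub[OF bilinear_br] bilinear_rsub[OF bilinear_br]

lemmas B_simps[simp] = bilinear_ladd[OF bilinear_B] bilinear_radd[OF bilinear_B]
  bilinear_lmul[OF bilinear_B] bilinear_rmul[OF bilinear_B]
  bilinear_lneg[OF bilinear_B] bilinear_rneg[OF bilinear_B]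
  bilinear_lzero[OF bilinear_B] bilinear_rzero[OF bilinear_B]
  bilinear_lsub[OF bilinear_B] bilinear_rsub[OF bilinear_B]

lemma br_self[simp]: "br x x = 0"
  using lie by (simp add: lie_algebra_def)

lemma br_anticomm: "br y x = - br x y"
proof -
  have "0 = br (x + y) (x + y)"
    by (simp only: br_self)
  also have "\<dots> = br x x + br x y + (br y x + br y y)"
    by (simp only: br_simps(1,2) add_ac)
  also have "\<dots> = br x y + br y x"
    by simp
  finally show ?thesis
    by (metis add.commute eq_neg_iff_add_eq_0)
qed

lemma subspace_Z: "subspace Z"
  by (auto simp: subspace_def center_def)

lemma subspace_G: "subspace G"
  by (auto simp: subspace_def orth_compl_def)

lemma center_br_left[simp]: "z \<in> Z \<Longrightarrow> br z y = 0"
  unfolding center_def by blast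

lemma center_br_right[simp]: "z \<in> Z \<Longrightarrow> br y z = 0"
  using br_anticomm[of z y] by simp

lemma G_orth_Z: "u \<in> G \<Longrightarrow> z \<in> Z \<Longrightarrow> B u z = 0"
  by (simp add: orth_compl_def)

lemma Z_orth_G: "u \<in> G \<Longrightarrow> z \<in> Z \<Longrightarrow> B z u = 0"
  using G_orth_Z[of u z] B_sym[of z u] by simp

lemma G_inter_Z: "x \<in> G \<Longrightarrow> x \<in> Z \<Longrightarrow> x = 0"
  using G_orth_Z[of x x] center_posdef[of x] by fastforce

definition Q where "Q a = (SOME z. z \<in> Z \<and> (\<forall>z'\<in>Z. B z z' = B a z'))"
definition P where "P a = a - Q a"

lemma Q_in_Z[simp]: "Q a \<in> Z" and B_Q: "z \<in> Z \<Longrightarrow> B (Q a) z = B a z"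
proof -
  have "\<exists>z. z \<in> Z \<and> (\<forall>z'\<in>Z. B z z' = B a z')"
    using posdef_projection_exists[OF bilinear_B subspace_Z center_posdef] by blast
  then have "Q a \<in> Z \<and> (\<forall>z'\<in>Z. B (Q a) z' = B a z')"
    unfolding Q_def by (rule someI_ex)
  then show "Q a \<in> Z" "z \<in> Z \<Longrightarrow> B (Q a) z = B a z"
    by auto
qed

lemma Z_eqI:
  assumes "z1 \<in> Z" "z2 \<in> Z" "\<And>z. z \<in> Z \<Longrightarrow> B z1 z = B z2 z"
  shows "z1 = z2"
proof -
  have "z1 - z2 \<in> Z"
    using assms(1,2) subspace_Z by (simp add: subspace_diff)
  moreover have "B (z1 - z2) (z1 - z2) = 0"
    using assms(3)[OF \<open>z1 - z2 \<in> Z\<close>] by simp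
  ultimately show ?thesis
    using center_posdef by force
qed

lemma Q_Z: "z \<in> Z \<Longrightarrow> Q z = z"
  by (rule Z_eqI) (auto simp: B_Q)

lemma Q_G: "u \<in> G \<Longrightarrow> Q u = 0"
  by (rule Z_eqI) (auto simp: B_Q G_orth_Z subspace_0[OF subspace_Z])

lemma P_in_G[simp]: "P a \<in> G"
  by (simp add: orth_compl_def P_def B_Q)

lemma linear_Q: "linear Q"
  by (rule linearI; rule Z_eqI) (auto simp: B_Q subspace_add[OF subspace_Z] subspace_scale[OF subspace_Z])

lemma linear_P: "linear P"
  unfolding P_def using linear_compose_sub[OF linear_ident linear_Q] .

lemmas Q_simps[simp] = linear_add[OF linear_Q] linear_scale[OF linear_Q] linear_diff[OF linear_Q]
  linear_neg[OF linear_Q] linear_0[OF linear_Q]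

lemmas P_simps[simp] = linear_add[OF linear_P] linear_scale[OF linear_P] linear_diff[OF linear_P]
  linear_neg[OF linear_P] linear_0[OF linear_P]

lemma P_G: "u \<in> G \<Longrightarrow> P u = u"
  by (simp add: P_def Q_G)

lemma P_Z: "z \<in> Z \<Longrightarrow> P z = 0"
  by (simp add: P_def Q_Z)

lemma P_plus_Q: "P a + Q a = a"
  by (simp add: P_def)

lemma P_P[simp]: "P (P a) = P a" and Q_Q[simp]: "Q (Q a) = Q a"
  and P_Q[simp]: "P (Q a) = 0" and Q_P[simp]: "Q (P a) = 0"
  by (simp_all add: P_G Q_Z P_Z Q_G)

lemma B_decompose: "B a b = B (P a) (P b) + B (Q a) (Q b)"
proof -
  have "B a b = B (P a + Q a) (P b + Q b)"
    by (simp only: P_plus_Q)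
  then show ?thesis
    by (simp add: G_orth_Z Z_orth_G)
qed

lemma G_eqI:
  assumes "a \<in> G" "b \<in> G" "\<And>p. p \<in> G \<Longrightarrow> B a p = B b p"
  shows "a = b"
proof -
  have "B (a - b) y = 0" for y
    using B_decompose[of "a - b" y] assms by (simp add: P_G Q_G)
  then show ?thesis
    using lorentzian_nondegenerate[OF lor, of "a - b"] by simp
qed

lemma represents_G:
  assumes "linear l"
  shows "\<exists>!r. r \<in> G \<and> (\<forall>p\<in>G. B r p = l p)"
proof -
  obtain r where r: "\<And>y. B r y = l y"
    using lorentzian_represents[OF lor assms] by blast
  have "B (P r) p = l p" if "p \<in> G" for p
    using r Z_orth_G[OF that, of "Q r"] by (simp add: P_def)
  then show ?thesis
    by (intro ex1I[of _ "P r"]) (auto intro: G_eqI)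
qed

lemma omega_eq: "omega br B u v = Q (br u v)"
  unfolding omega_def
proof (rule the_equality)
  show "Q (br u v) \<in> Z \<and> br u v - Q (br u v) \<in> G"
    using P_in_G[of "br u v"] by (simp add: P_def)
  fix x assume x: "x \<in> Z \<and> br u v - x \<in> G"
  have "x - Q (br u v) = P (br u v) - (br u v - x)"
    by (simp add: P_def)
  also have "\<dots> \<in> G"
    using x subspace_diff[OF subspace_G P_in_G] by blast
  finally have "x - Q (br u v) \<in> G" .
  moreover have "x - Q (br u v) \<in> Z"
    using x subspace_diff[OF subspace_Z] by simp
  ultimately show "x = Q (br u v)"
    using G_inter_Z by fastforce
qed

lemma brg_eq: "brg br B u v = P (br u v)"
  by (simp add: brg_def omega_eq P_def)

lemma adjoint_on_G:
  assumes "linear f"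
  shows "adjoint_on G B f y \<in> G" and "p \<in> G \<Longrightarrow> B (adjoint_on G B f y) p = B (f p) y"
proof -
  have "linear (\<lambda>p. B (f p) y)"
    using linear_compose[OF assms, of "\<lambda>x. B x y"] bilinear_B by (simp add: bilinear_def o_def)
  from theI'[OF represents_G[OF this]]
  show "adjoint_on G B f y \<in> G" "p \<in> G \<Longrightarrow> B (adjoint_on G B f y) p = B (f p) y"
    unfolding adjoint_on_def by auto
qed

abbreviation S where "S \<equiv> S_op br B"

lemma S_in_G[simp]: "S x u \<in> G"
  and B_S: "p \<in> G \<Longrightarrow> B (S x u) p = B (Q (br u p)) x"
proof -
  have "linear (omega br B u)"
    by (rule linearI) (simp_all add: omega_eq)
  from adjoint_on_G[OF this]
  show "S x u \<in> G" "p \<in> G \<Longrightarrow> B (S x u) p = B (Q (br u p)) x"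
    by (simp_all add: S_op_def omega_star_def omega_eq)
qed

lemma bilinear_S: "bilinear S"
  by (rule bilinearI; rule G_eqI)
    (simp_all add: B_S subspace_add[OF subspace_G] subspace_scale[OF subspace_G])

lemmas S_simps[simp] = bilinear_ladd[OF bilinear_S] bilinear_radd[OF bilinear_S]
  bilinear_lmul[OF bilinear_S] bilinear_rmul[OF bilinear_S]
  bilinear_lneg[OF bilinear_S] bilinear_rneg[OF bilinear_S]
  bilinear_lzero[OF bilinear_S] bilinear_rzero[OF bilinear_S]
  bilinear_lsub[OF bilinear_S] bilinear_rsub[OF bilinear_S]

lemma P_S[simp]: "P (S x u) = S x u" and Q_S[simp]: "Q (S x u) = 0"
  by (simp_all add: P_G Q_G)

abbreviation J where "J \<equiv> J_op br B"

lemma J_in_G: "J u v \<in> G"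
  and B_J: "p \<in> G \<Longrightarrow> B (J u v) p = B (P (br v p)) u"
proof -
  have "linear (brg br B v)"
    by (rule linearI) (simp_all add: brg_eq)
  from adjoint_on_G[OF this]
  show "J u v \<in> G" "p \<in> G \<Longrightarrow> B (J u v) p = B (P (br v p)) u"
    by (simp_all add: J_op_def ad_star_def brg_eq)
qed

abbreviation Lg where "Lg \<equiv> LC G (brg br B) B"

lemma Lg_in_G[simp]: "Lg u v \<in> G"
  and B_Lg: "w \<in> G \<Longrightarrow>
    B (Lg u v) w = (B (P (br u v)) w + B (P (br w u)) v + B (P (br w v)) u) / 2"
proof -
  define l where "l w = B (P (br u v)) w + B (P (br w u)) v + B (P (br w v)) u" for w
  have "linear (\<lambda>w. l w / 2)"
    unfolding l_def by (rule linearI) (simp_all add: field_simps)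
  then obtain r where r: "r \<in> G" "\<And>p. p \<in> G \<Longrightarrow> B r p = l p / 2"
    using represents_G by blast
  have "\<exists>!z. z \<in> G \<and> (\<forall>w\<in>G. 2 * B z w = l w)"
  proof (rule ex1I[of _ r])
    show "r \<in> G \<and> (\<forall>w\<in>G. 2 * B r w = l w)"
      using r by (simp add: mult.commute)
    show "z = r" if z: "z \<in> G \<and> (\<forall>w\<in>G. 2 * B z w = l w)" for z
    proof (rule G_eqI)
      show "B z p = B r p" if "p \<in> G" for p
        using z r(2)[OF that] that by auto
    qed (use z r in auto)
  qed
  then have "Lg u v \<in> G \<and> (\<forall>w\<in>G. 2 * B (Lg u v) w = l w)"
    unfolding LC_def brg_eq l_def by (rule theI')
  then show "Lg u v \<in> G"
    and "w \<in> G \<Longrightarrow>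
      B (Lg u v) w = (B (P (br u v)) w + B (P (br w u)) v + B (P (br w v)) u) / 2"
    by (auto simp: l_def field_simps)
qed

lemma bilinear_Lg: "bilinear Lg"
  by (rule bilinearI; rule G_eqI)
    (simp_all add: B_Lg subspace_add[OF subspace_G] subspace_scale[OF subspace_G] field_simps)

lemmas Lg_simps[simp] = bilinear_ladd[OF bilinear_Lg] bilinear_radd[OF bilinear_Lg]
  bilinear_lmul[OF bilinear_Lg] bilinear_rmul[OF bilinear_Lg]
  bilinear_lneg[OF bilinear_Lg] bilinear_rneg[OF bilinear_Lg]
  bilinear_lzero[OF bilinear_Lg] bilinear_rzero[OF bilinear_Lg]
  bilinear_lsub[OF bilinear_Lg] bilinear_rsub[OF bilinear_Lg]

lemma P_Lg[simp]: "P (Lg u v) = Lg u v" and Q_Lg[simp]: "Q (Lg u v) = 0"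
  by (simp_all add: P_G Q_G)

definition Lh where
  "Lh a b = Lg (P a) (P b) + (1/2) *\<^sub>R Q (br (P a) (P b))
    - (1/2) *\<^sub>R S (Q b) (P a) - (1/2) *\<^sub>R S (Q a) (P b)"

lemma br_P: "br a b = br (P a) (P b)"
proof -
  have "br a b = br (P a + Q a) (P b + Q b)"
    by (simp only: P_plus_Q)
  then show ?thesis
    by simp
qed

lemma B_Lh: "2 * B (Lh a b) w = B (br a b) w + B (br w a) b + B (br w b) a"
proof -
  have split: "B (br c d) e = B (P (br (P c) (P d))) (P e) + B (Q (br (P c) (P d))) (Q e)" for c d e
    by (subst br_P) (rule B_decompose)
  have "B (Lh a b) w = B (P (Lh a b)) (P w) + B (Q (Lh a b)) (Q w)"
    by (rule B_decompose)
  then show ?thesis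
    unfolding split[of a b] split[of w a] split[of w b]
    by (simp add: Lh_def B_Lg B_S br_anticomm[of "P w"] Z_orth_G G_orth_Z field_simps)
qed

lemma LC_UNIV_eq: "LC UNIV br B a b = Lh a b"
  unfolding LC_def
proof (rule the_equality)
  show "Lh a b \<in> UNIV \<and> (\<forall>w\<in>UNIV. 2 * B (Lh a b) w = B (br a b) w + B (br w a) b + B (br w b) a)"
    by (simp add: B_Lh)
  fix z assume z: "z \<in> UNIV \<and> (\<forall>w\<in>UNIV. 2 * B z w = B (br a b) w + B (br w a) b + B (br w b) a)"
  have "B (z - Lh a b) w = 0" for w
    using z[THEN conjunct2, rule_format, of w] B_Lh[of a b w] by simp
  then show "z = Lh a b"
    using lorentzian_nondegenerate[OF lor, of "z - Lh a b"] by simp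
qed

lemma bilinear_Lh: "bilinear Lh"
  by (rule bilinearI) (simp_all add: Lh_def algebra_simps)

lemmas Lh_simps = bilinear_ladd[OF bilinear_Lh] bilinear_radd[OF bilinear_Lh]
  bilinear_lmul[OF bilinear_Lh] bilinear_rmul[OF bilinear_Lh]

lemma linear_curv: "linear (\<lambda>w. curv UNIV br B a w b)"
  unfolding curv_def LC_UNIV_eq by (rule linearI) (simp_all add: Lh_simps algebra_simps)

section \<open>Traces on g\<close>

definition G_basis where "G_basis = (SOME E. onb G E)"

definition dual where "dual e = (THE r. r \<in> G \<and> (\<forall>p\<in>G. B r p = p \<bullet> e))"

definition form_trace :: "('a \<Rightarrow> 'a \<Rightarrow> real) \<Rightarrow> real" where
  "form_trace \<beta> = (\<Sum>e\<in>G_basis. \<beta> e (dual e))"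

lemma onb_G_basis: "onb G G_basis"
  unfolding G_basis_def by (rule onb_some[OF subspace_G])

lemma G_basis_in_G: "e \<in> G_basis \<Longrightarrow> e \<in> G"
  using onb_subset[OF onb_G_basis] by blast

lemma dual_in_G[simp]: "dual e \<in> G" and B_dual: "p \<in> G \<Longrightarrow> B p (dual e) = p \<bullet> e"
proof -
  have "linear (\<lambda>p. p \<bullet> e)"
    by (rule linearI) (simp_all add: inner_add_left)
  from theI'[OF represents_G[OF this]]
  show "dual e \<in> G" "p \<in> G \<Longrightarrow> B p (dual e) = p \<bullet> e"
    unfolding dual_def by (auto simp: B_sym)
qed

lemma G_basis_expansion: "y \<in> G \<Longrightarrow> y = (\<Sum>e\<in>G_basis. B y (dual e) *\<^sub>R e)"
  using onb_expansion[OF onb_G_basis] by (simp add: B_dual)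

lemma trace_on_G_eq_form_trace:
  assumes "\<And>x. x \<in> G \<Longrightarrow> f x \<in> G" and "\<And>x y. x \<in> G \<Longrightarrow> y \<in> G \<Longrightarrow> B (f x) y = \<beta> x y"
  shows "trace_on G f = form_trace \<beta>"
proof -
  have "f e \<bullet> e = \<beta> e (dual e)" if "e \<in> G_basis" for e
    using B_dual[OF assms(1), of e e] assms(2)[of e "dual e"] G_basis_in_G[OF that] by simp
  then show ?thesis
    unfolding trace_on_def form_trace_def G_basis_def[symmetric] by (rule sum.cong[OF refl])
qed

lemma form_trace_cong:
  assumes "\<And>x y. x \<in> G \<Longrightarrow> y \<in> G \<Longrightarrow> \<beta> x y = \<gamma> x y"
  shows "form_trace \<beta> = form_trace \<gamma>"
  unfolding form_trace_def using assms by (intro sum.cong) (auto simp: G_basis_in_G)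

lemma form_trace_add: "form_trace (\<lambda>x y. \<beta> x y + \<gamma> x y) = form_trace \<beta> + form_trace \<gamma>"
  by (simp add: form_trace_def sum.distrib)

lemma form_trace_scale: "form_trace (\<lambda>x y. c * \<beta> x y) = c * form_trace \<beta>"
  by (simp add: form_trace_def sum_distrib_left)

lemma form_trace_transpose:
  assumes \<beta>: "bilinear \<beta>"
  shows "form_trace (\<lambda>x y. \<beta> y x) = form_trace \<beta>"
proof -
  have lin: "linear (\<lambda>x. \<beta> x y)" "linear (\<lambda>y. \<beta> x y)" for x y
    using \<beta> by (simp_all add: bilinear_def)
  have expand: "dual e = (\<Sum>e'\<in>G_basis. B (dual e) (dual e') *\<^sub>R e')" for e
    using G_basis_expansion[OF dual_in_G] .
  have left: "\<beta> (dual e) e = (\<Sum>e'\<in>G_basis. B (dual e) (dual e') * \<beta> e' e)" for e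
  proof -
    have "\<beta> (dual e) e = \<beta> (\<Sum>e'\<in>G_basis. B (dual e) (dual e') *\<^sub>R e') e"
      by (rule arg_cong[where f = "\<lambda>x. \<beta> x e", OF expand])
    then show ?thesis
      by (simp add: linear_sum[OF lin(1)] linear_scale[OF lin(1)])
  qed
  have right: "\<beta> e (dual e) = (\<Sum>e'\<in>G_basis. B (dual e) (dual e') * \<beta> e e')" for e
  proof -
    have "\<beta> e (dual e) = \<beta> e (\<Sum>e'\<in>G_basis. B (dual e) (dual e') *\<^sub>R e')"
      by (rule arg_cong[where f = "\<lambda>x. \<beta> e x", OF expand])
    then show ?thesis
      by (simp add: linear_sum[OF lin(2)] linear_scale[OF lin(2)])
  qed
  have "form_trace (\<lambda>x y. \<beta> y x) = (\<Sum>e\<in>G_basis. \<Sum>e'\<in>G_basis. B (dual e) (dual e') * \<beta> e' e)"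
    by (simp add: form_trace_def left)
  also have "\<dots> = (\<Sum>e'\<in>G_basis. \<Sum>e\<in>G_basis. B (dual e') (dual e) * \<beta> e' e)"
    by (subst sum.swap) (simp add: B_sym)
  also have "\<dots> = form_trace \<beta>"
    by (simp add: form_trace_def right)
  finally show ?thesis .
qed

lemma form_trace_skew:
  assumes "bilinear \<beta>" and skew: "\<And>x y. \<beta> y x = - \<beta> x y"
  shows "form_trace \<beta> = 0"
proof -
  have "(\<lambda>x y. \<beta> y x) = (\<lambda>x y. (-1) * \<beta> x y)"
    by (intro ext) (subst skew, simp)
  then have "form_trace \<beta> = form_trace (\<lambda>x y. (-1) * \<beta> x y)"
    using form_trace_transpose[OF assms(1)] by simp
  also have "\<dots> = - form_trace \<beta>"
    by (simp only: form_trace_scale)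
  finally show ?thesis
    by simp
qed

lemma trace_split:
  assumes "linear f"
  shows "trace_on UNIV f = trace_on G (\<lambda>w. P (f w)) + trace_on Z (\<lambda>w. Q (f w))"
proof (rule trace_on_direct_sum[OF subspace_UNIV subspace_G _ subspace_Z])
  show "G \<inter> Z = {0}"
    using G_inter_Z subspace_0[OF subspace_G] subspace_0[OF subspace_Z] by auto
qed (simp_all add: linear_P linear_Q P_plus_Q assms)

lemma trace_P_br_right: "trace_on G (\<lambda>w. P (br w c)) = 0"
proof -
  have lin: "linear (\<lambda>w. br w c)"
    by (rule linearI) simp_all
  have "trace_on UNIV (\<lambda>w. br w c) = trace_on UNIV (\<lambda>w. (-1) *\<^sub>R br c w)"
    by (simp add: br_anticomm[of c])
  also have "\<dots> = 0"
    using trace_ad_nilpotent[OF bilinear_br nilp, of c] by (simp only: trace_on_scaleR)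
  finally have "trace_on G (\<lambda>w. P (br w c)) + trace_on Z (\<lambda>w. Q (br w c)) = 0"
    using trace_split[OF lin] by simp
  moreover have "trace_on Z (\<lambda>w. Q (br w c)) = trace_on Z (\<lambda>w. 0)"
    by (rule trace_on_cong[OF subspace_Z]) simp
  ultimately show ?thesis
    by (simp add: trace_on_zero)
qed

lemma trace_S: "trace_on G (S x) = 0"
proof -
  have "trace_on G (S x) = form_trace (\<lambda>a b. B (Q (br a b)) x)"
    by (rule trace_on_G_eq_form_trace) (simp_all add: B_S)
  also have "\<dots> = 0"
  proof (rule form_trace_skew)
    show "bilinear (\<lambda>a b. B (Q (br a b)) x)"
      by (rule bilinearI) simp_all
    show "B (Q (br b a)) x = - B (Q (br a b)) x" for a b
      by (subst br_anticomm) simp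
  qed
  finally show ?thesis .
qed

lemma trace_S_omega_swap:
  "trace_on G (\<lambda>w. S (Q (br u w)) v) = trace_on G (\<lambda>w. S (Q (br v w)) u)"
proof -
  have "trace_on G (\<lambda>w. S (Q (br u w)) v) = form_trace (\<lambda>a b. B (Q (br v b)) (Q (br u a)))"
    by (rule trace_on_G_eq_form_trace) (simp_all add: B_S)
  also have "\<dots> = form_trace (\<lambda>a b. B (Q (br v a)) (Q (br u b)))"
    by (rule form_trace_transpose, rule bilinearI) simp_all
  also have "\<dots> = trace_on G (\<lambda>w. S (Q (br v w)) u)"
    by (rule trace_on_G_eq_form_trace[symmetric]) (simp_all add: B_S, simp add: B_sym)
  finally show ?thesis .
qed

lemma trace_Z_omega_S:
  "trace_on Z (\<lambda>z. Q (br u (S z v))) = trace_on G (\<lambda>w. S (Q (br u w)) v)"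
  by (rule trace_on_comp_commute[OF subspace_Z subspace_G]) (auto intro: linearI)

lemma trace_Lg_left: "trace_on G (\<lambda>w. Lg w c) = 0"
proof -
  have "trace_on G (\<lambda>w. Lg w c) = form_trace (\<lambda>a b.
      (1/2) * (B (P (br a c)) b + B (P (br b a)) c + B (P (br b c)) a))"
    by (rule trace_on_G_eq_form_trace) (simp_all add: B_Lg)
  also have "\<dots> = (1/2) * (form_trace (\<lambda>a b. B (P (br a c)) b)
      + form_trace (\<lambda>a b. B (P (br b a)) c) + form_trace (\<lambda>a b. B (P (br b c)) a))"
    by (simp only: form_trace_scale form_trace_add)
  also have "form_trace (\<lambda>a b. B (P (br a c)) b) = 0"
    using trace_on_G_eq_form_trace[of "\<lambda>w. P (br w c)"] trace_P_br_right by simp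
  also have "form_trace (\<lambda>a b. B (P (br b a)) c) = 0"
  proof (rule form_trace_skew)
    show "bilinear (\<lambda>a b. B (P (br b a)) c)"
      by (rule bilinearI) simp_all
    show "B (P (br a b)) c = - B (P (br b a)) c" for a b
      by (subst br_anticomm) simp
  qed
  also have "form_trace (\<lambda>a b. B (P (br b c)) a) = form_trace (\<lambda>a b. B (P (br a c)) b)"
    by (rule form_trace_transpose, rule bilinearI) simp_all
  also have "\<dots> = 0"
    using trace_on_G_eq_form_trace[of "\<lambda>w. P (br w c)"] trace_P_br_right by simp
  finally show ?thesis
    by simp
qed

lemma trace_Lg_S:
  "trace_on G (\<lambda>w. Lg u (S x w))
    = trace_on G (\<lambda>w. S x (P (br u w))) - 1/2 * trace_on G (\<lambda>w. J u (S x w))"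
proof -
  have "trace_on G (\<lambda>w. Lg u (S x w)) = form_trace (\<lambda>a b.
      (1/2) * (B (P (br u (S x a))) b + B (P (br b u)) (S x a) + B (P (br b (S x a))) u))"
    by (rule trace_on_G_eq_form_trace) (simp_all add: B_Lg)
  also have "\<dots> = (1/2) * (form_trace (\<lambda>a b. B (P (br u (S x a))) b)
      + form_trace (\<lambda>a b. B (P (br b u)) (S x a)) + form_trace (\<lambda>a b. B (P (br b (S x a))) u))"
    by (simp only: form_trace_scale form_trace_add)
  also have "form_trace (\<lambda>a b. B (P (br u (S x a))) b) = trace_on G (\<lambda>w. P (br u (S x w)))"
    by (rule trace_on_G_eq_form_trace[symmetric]) simp_all
  also have "\<dots> = trace_on G (\<lambda>w. S x (P (br u w)))"
    by (rule trace_on_comp_commute[OF subspace_G subspace_G]) (auto intro: linearI)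
  also have "form_trace (\<lambda>a b. B (P (br b u)) (S x a)) = form_trace (\<lambda>a b. B (P (br a u)) (S x b))"
    by (rule form_trace_transpose[symmetric], rule bilinearI) simp_all
  also have "\<dots> = trace_on G (\<lambda>w. S x (P (br u w)))"
  proof (rule trace_on_G_eq_form_trace[symmetric])
    fix a b assume "a \<in> G" "b \<in> G"
    have "br b (P (br a u)) = br (P (br u a)) b"
      using br_anticomm[of a u] br_anticomm[of b "P (br u a)"] by simp
    then show "B (S x (P (br u a))) b = B (P (br a u)) (S x b)"
      using \<open>b \<in> G\<close> by (simp add: B_S B_sym[of "P (br a u)"])
  qed simp
  also have "form_trace (\<lambda>a b. B (P (br b (S x a))) u) = form_trace (\<lambda>a b. (-1) * B (J u (S x a)) b)"
    by (rule form_trace_cong) (subst br_anticomm, simp add: B_J)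
  also have "\<dots> = - trace_on G (\<lambda>w. J u (S x w))"
    using trace_on_G_eq_form_trace[of "\<lambda>w. J u (S x w)"] J_in_G by (simp only: form_trace_scale)
  finally show ?thesis
    by simp
qed

section \<open>Curvature\<close>

lemma P_curv_GGG:
  assumes "u \<in> G" "v \<in> G" "w \<in> G"
  shows "P (curv UNIV br B u w v) = curv G (brg br B) B u w v - (1/2) *\<^sub>R S (Q (br u w)) v
    + (1/4) *\<^sub>R S (Q (br w v)) u - (1/4) *\<^sub>R S (Q (br u v)) w"
proof -
  have [simp]: "P u = u" "P v = v" "P w = w" "Q u = 0" "Q v = 0" "Q w = 0"
    using assms by (simp_all add: P_G Q_G)
  show ?thesis
    unfolding curv_def LC_UNIV_eq by (simp add: Lh_def brg_eq algebra_simps)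
qed

lemma Q_curv_GZG:
  assumes "u \<in> G" "v \<in> G" "z \<in> Z"
  shows "Q (curv UNIV br B u z v) = (1/4) *\<^sub>R Q (br u (S z v))"
proof -
  have [simp]: "P u = u" "P v = v" "P z = 0" "Q u = 0" "Q v = 0" "Q z = z"
    using assms by (simp_all add: P_G Q_G P_Z Q_Z)
  show ?thesis
    unfolding curv_def LC_UNIV_eq using assms(3) by (simp add: Lh_def algebra_simps)
qed

lemma P_curv_ZGZ:
  assumes "x \<in> Z" "y \<in> Z" "w \<in> G"
  shows "P (curv UNIV br B x w y) = - (1/4) *\<^sub>R S x (S y w)"
proof -
  have [simp]: "P x = 0" "P y = 0" "P w = w" "Q x = x" "Q y = y" "Q w = 0"
    using assms by (simp_all add: P_G Q_G P_Z Q_Z)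
  show ?thesis
    unfolding curv_def LC_UNIV_eq using assms(1) by (simp add: Lh_def algebra_simps)
qed

lemma Q_curv_ZZZ:
  assumes "x \<in> Z" "y \<in> Z" "z \<in> Z"
  shows "Q (curv UNIV br B x z y) = 0"
proof -
  have [simp]: "P x = 0" "P y = 0" "P z = 0" "Q x = x" "Q y = y" "Q z = z"
    using assms by (simp_all add: P_Z Q_Z)
  show ?thesis
    unfolding curv_def LC_UNIV_eq using assms by (simp add: Lh_def algebra_simps)
qed

lemma P_curv_GGZ:
  assumes "u \<in> G" "x \<in> Z" "w \<in> G"
  shows "P (curv UNIV br B u w x) = - (1/2) *\<^sub>R S x (P (br u w)) + (1/2) *\<^sub>R Lg u (S x w)
    - (1/2) *\<^sub>R Lg w (S x u)"
proof -
  have [simp]: "P u = u" "P x = 0" "P w = w" "Q u = 0" "Q x = x" "Q w = 0"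
    using assms by (simp_all add: P_G Q_G P_Z Q_Z)
  show ?thesis
    unfolding curv_def LC_UNIV_eq by (simp add: Lh_def algebra_simps)
qed

lemma Q_curv_GZZ:
  assumes "u \<in> G" "x \<in> Z" "z \<in> Z"
  shows "Q (curv UNIV br B u z x) = 0"
proof -
  have [simp]: "P u = u" "P x = 0" "P z = 0" "Q u = 0" "Q x = x" "Q z = z"
    using assms by (simp_all add: P_G Q_G P_Z Q_Z)
  show ?thesis
    unfolding curv_def LC_UNIV_eq using assms by (simp add: Lh_def algebra_simps)
qed

lemma ricci_split:
  "ricci UNIV br B a b
    = trace_on G (\<lambda>w. P (curv UNIV br B a w b)) + trace_on Z (\<lambda>w. Q (curv UNIV br B a w b))"
  unfolding ricci_def by (rule trace_split[OF linear_curv])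

lemma ricci_G_G:
  assumes u: "u \<in> G" and v: "v \<in> G"
  shows "ricci UNIV br B u v = ricci G (brg br B) B u v
    - 1/2 * trace_on G (\<lambda>w. omega_star br B u (omega br B v w))"
proof -
  define T where "T = trace_on G (\<lambda>w. S (Q (br u w)) v)"
  have "trace_on G (\<lambda>w. S (Q (br w v)) u) = trace_on G (\<lambda>w. (-1) *\<^sub>R S (Q (br v w)) u)"
    by (simp add: br_anticomm[of _ v])
  also have "\<dots> = - T"
    by (simp only: trace_on_scaleR T_def trace_S_omega_swap[of v u])
  finally have swap: "trace_on G (\<lambda>w. S (Q (br w v)) u) = - T" .
  have "trace_on G (\<lambda>w. P (curv UNIV br B u w v)) = trace_on G (\<lambda>w. curv G (brg br B) B u w v
      - (1/2) *\<^sub>R S (Q (br u w)) v + (1/4) *\<^sub>R S (Q (br w v)) u - (1/4) *\<^sub>R S (Q (br u v)) w)"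
    by (rule trace_on_cong[OF subspace_G]) (simp add: P_curv_GGG u v)
  also have "\<dots> = ricci G (brg br B) B u v - 1/2 * T + 1/4 * trace_on G (\<lambda>w. S (Q (br w v)) u)
      - 1/4 * trace_on G (S (Q (br u v)))"
    by (simp only: trace_on_add trace_on_diff trace_on_scaleR ricci_def T_def)
  finally have G_part: "trace_on G (\<lambda>w. P (curv UNIV br B u w v)) = ricci G (brg br B) B u v - 3/4 * T"
    by (simp add: swap trace_S)
  have "trace_on Z (\<lambda>z. Q (curv UNIV br B u z v)) = trace_on Z (\<lambda>z. (1/4) *\<^sub>R Q (br u (S z v)))"
    by (rule trace_on_cong[OF subspace_Z]) (simp add: Q_curv_GZG u v)
  also have "\<dots> = 1/4 * T"
    by (simp only: trace_on_scaleR trace_Z_omega_S T_def)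
  finally have Z_part: "trace_on Z (\<lambda>z. Q (curv UNIV br B u z v)) = 1/4 * T" .
  have "trace_on G (\<lambda>w. omega_star br B u (omega br B v w)) = T"
    using trace_S_omega_swap[of v u] by (simp add: S_op_def omega_eq T_def)
  then show ?thesis
    using ricci_split[of u v] G_part Z_part by simp
qed

lemma ricci_Z_Z:
  assumes x: "x \<in> Z" and y: "y \<in> Z"
  shows "ricci UNIV br B x y = - 1/4 * trace_on G (\<lambda>w. S x (S y w))"
proof -
  have "trace_on G (\<lambda>w. P (curv UNIV br B x w y)) = trace_on G (\<lambda>w. (- (1/4)) *\<^sub>R S x (S y w))"
    by (rule trace_on_cong[OF subspace_G]) (simp add: P_curv_ZGZ x y)
  also have "\<dots> = - 1/4 * trace_on G (\<lambda>w. S x (S y w))"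
    by (simp only: trace_on_scaleR)
  moreover have "trace_on Z (\<lambda>z. Q (curv UNIV br B x z y)) = trace_on Z (\<lambda>z. 0)"
    by (rule trace_on_cong[OF subspace_Z]) (simp add: Q_curv_ZZZ x y)
  ultimately show ?thesis
    using ricci_split[of x y] by (simp add: trace_on_zero)
qed

lemma ricci_G_Z:
  assumes u: "u \<in> G" and x: "x \<in> Z"
  shows "ricci UNIV br B u x = - 1/4 * trace_on G (\<lambda>w. J u (S x w))"
proof -
  have "trace_on G (\<lambda>w. P (curv UNIV br B u w x)) = trace_on G (\<lambda>w. - (1/2) *\<^sub>R S x (P (br u w))
      + (1/2) *\<^sub>R Lg u (S x w) - (1/2) *\<^sub>R Lg w (S x u))"
    by (rule trace_on_cong[OF subspace_G]) (simp add: P_curv_GGZ u x)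
  also have "\<dots> = - 1/2 * trace_on G (\<lambda>w. S x (P (br u w))) + 1/2 * trace_on G (\<lambda>w. Lg u (S x w))
      - 1/2 * trace_on G (\<lambda>w. Lg w (S x u))"
    by (simp only: trace_on_add trace_on_diff trace_on_scaleR)
  finally have G_part: "trace_on G (\<lambda>w. P (curv UNIV br B u w x)) = - 1/4 * trace_on G (\<lambda>w. J u (S x w))"
    by (simp add: trace_Lg_S trace_Lg_left field_simps)
  have "trace_on Z (\<lambda>z. Q (curv UNIV br B u z x)) = trace_on Z (\<lambda>z. 0)"
    by (rule trace_on_cong[OF subspace_Z]) (simp add: Q_curv_GZZ u x)
  then show ?thesis
    using ricci_split[of u x] G_part by (simp add: trace_on_zero)
qed

end

theorem proposition3p2:
  fixes br :: "'a::euclidean_space \<Rightarrow> 'a \<Rightarrow> 'a" and B :: "'a \<Rightarrow> 'a \<Rightarrow> real"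
  assumes lie: "lie_algebra br"
    and nilp: "nilpotent_lie br"
    and lor: "lorentzian B"
    and Z_nondeg: "\<forall>x\<in>center br. (\<forall>y\<in>center br. B x y = 0) \<longrightarrow> x = 0"
    and Z_posdef: "\<forall>x\<in>center br. x \<noteq> 0 \<longrightarrow> B x x > 0"
  shows "(\<forall>u\<in>gpart br B. \<forall>v\<in>gpart br B.
            ricci UNIV br B u v =
              ricci (gpart br B) (brg br B) B u v
              - 1/2 * trace_on (gpart br B) (\<lambda>w. omega_star br B u (omega br B v w)))
       \<and> (\<forall>x\<in>center br. \<forall>y\<in>center br.
            ricci UNIV br B x y =
              - 1/4 * trace_on (gpart br B) (\<lambda>w. S_op br B x (S_op br B y w)))
       \<and> (\<forall>u\<in>gpart br B. \<forall>x\<in>center br.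
            ricci UNIV br B u x =
              - 1/4 * trace_on (gpart br B) (\<lambda>w. J_op br B u (S_op br B x w)))"
proof -
  interpret nilpotent_lorentzian br B
    by (rule nilpotent_lorentzian.intro[OF lie nilp lor]) (use Z_posdef in blast)
  show ?thesis
    using ricci_G_G ricci_Z_Z ricci_G_Z by blast
qed

end
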